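(* Let $1\le j\le k$ be integers, let $G$ and $H$ be complementary $(j,k)$-bicliques, and let $g(x)$, $h(x)$ be the interesting factors of $P_G(x)$ and $P_H(x)$ respectively. Then $$g(x)=(-1)^j\,h(-x+j+k-1).$$
   Context: All graphs are finite and simple. For integers $1\le j\le k$, a $(j,k)$-biclique is a graph whose vertex set is the disjoint union of a $j$-clique and a $k$-clique, with an arbitrary set of additional edges (bridging edges) each joining a vertex of the $j$-clique to a vertex of the $k$-clique. Two $(j,k)$-bicliques $G,H$ on the same two cliques are complementary if $H$ is obtained from $G$ by replacing every bridging edge by a non-edge and every non-adjacent pair (one vertex in each clique) by an edge, keeping both cliques. $P_G(x)$ is the chromatic polynomial; $(x)_n=x(x-1)\cdots(x-n+1)$. The interesting factor of a $(j,k)$-biclique $G$ is the degree-$j$ polynomial $P_G(x)/(x)_k$. *)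

theory Defs
  imports Complex_Main "HOL-Library.FuncSet" "HOL-Computational_Algebra.Polynomial"
begin

definition proper_colorings :: "'a set \<Rightarrow> ('a \<Rightarrow> 'a \<Rightarrow> bool) \<Rightarrow> nat \<Rightarrow> ('a \<Rightarrow> nat) set" where
  "proper_colorings V adj n =
     {c \<in> V \<rightarrow>\<^sub>E {..<n}. \<forall>u\<in>V. \<forall>v\<in>V. adj u v \<longrightarrow> c u \<noteq> c v}"

definition chromatic_poly :: "'a set \<Rightarrow> ('a \<Rightarrow> 'a \<Rightarrow> bool) \<Rightarrow> real poly" where
  "chromatic_poly V adj =
     (THE p. \<forall>n::nat. poly p (of_nat n) = of_nat (card (proper_colorings V adj n)))"

definition falling_poly :: "nat \<Rightarrow> real poly" where
  "falling_poly k = (\<Prod>i<k. [:- of_nat i, 1:])"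

text \<open>Adjacency of the (j,k)-biclique with cliques A (size j) and B (size k)
and set of bridging edges F \<subseteq> A \<times> B.\<close>
definition biclique_adj :: "'a set \<Rightarrow> 'a set \<Rightarrow> ('a \<times> 'a) set \<Rightarrow> 'a \<Rightarrow> 'a \<Rightarrow> bool" where
  "biclique_adj A B F u v \<longleftrightarrow>
     u \<noteq> v \<and> ((u \<in> A \<and> v \<in> A) \<or> (u \<in> B \<and> v \<in> B) \<or> (u, v) \<in> F \<or> (v, u) \<in> F)"

definition compl_bridges :: "'a set \<Rightarrow> 'a set \<Rightarrow> ('a \<times> 'a) set \<Rightarrow> ('a \<times> 'a) set" where
  "compl_bridges A B F = (A \<times> B) - F"

text \<open>Interesting factor P_G(x) / (x)_k, k = |B| the larger clique.\<close>
definition interesting_factor :: "'a set \<Rightarrow> 'a set \<Rightarrow> ('a \<times> 'a) set \<Rightarrow> real poly" where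
  "interesting_factor A B F =
     chromatic_poly (A \<union> B) (biclique_adj A B F) div falling_poly (card B)"

end

theory Submission
  imports Defs
begin

(* With n colours, a proper colouring of the (j,k)-biclique with
   cliques A, B and bridging edges F is an injective colouring sigma of B followed by an
   injection of A into the colours avoiding the board {(a, sigma b) | (a,b) in F}.  So the
   chromatic polynomial is governed by rook theory: counting injections avoiding a board.

   The first section proves two such counts for injections of A into a colour set C
   avoiding a board R, both by deletion-contraction on one cell: inclusion-exclusion over
   the matchings S of R (non-attacking rook placements) gives
   sum_S (-1)^|S| (|C|-|S|)_(|A|-|S|), and if R lies in A x T with C = T + U one may instead
   sum over the matchings S of the complementary board A x T - R, giving (|U|)_(|A|-|S|).
   The next sections transport these counts to biclique colourings and to polynomials: the
   interesting factor of F equals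
     sum over matchings S of F of (-1)^|S| (x-|S|)_(j-|S|)   and also
     sum over matchings S of A x B - F of (x-k)_(j-|S|).
   Applying the second formula to the complementary bridges, whose non-edges are exactly F,
   the theorem reduces to the termwise reflection (-1)^s (x-s)_(j-s) = (-1)^j (y-k)_(j-s)
   with y = j+k-1-x. *)

section \<open>Rook theory: injections avoiding a board\<close>

definition avoiding_inj :: "'a set \<Rightarrow> 'c set \<Rightarrow> ('a \<times> 'c) set \<Rightarrow> ('a \<Rightarrow> 'c) set" where
  "avoiding_inj A C R = {f \<in> A \<rightarrow>\<^sub>E C. inj_on f A \<and> (\<forall>a\<in>A. (a, f a) \<notin> R)}"

definition matchings :: "('a \<times> 'c) set \<Rightarrow> ('a \<times> 'c) set set" where
  "matchings R = {S. S \<subseteq> R \<and> inj_on fst S \<and> inj_on snd S}"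

definition strike :: "('a \<times> 'c) set \<Rightarrow> 'a \<Rightarrow> 'c \<Rightarrow> ('a \<times> 'c) set" where
  "strike R a c = {p \<in> R. fst p \<noteq> a \<and> snd p \<noteq> c}"

(* The falling factorial (c)_m on the naturals; it vanishes when c < m. *)
definition falling_nat :: "nat \<Rightarrow> nat \<Rightarrow> nat" where
  "falling_nat c m = (\<Prod>i<m. c - i)"

lemma finite_avoiding_inj: "finite A \<Longrightarrow> finite C \<Longrightarrow> finite (avoiding_inj A C R)"
  unfolding avoiding_inj_def by (rule finite_subset[OF _ finite_PiE]) auto

lemma card_injections:
  "finite A \<Longrightarrow> finite C \<Longrightarrow> card {f \<in> A \<rightarrow>\<^sub>E C. inj_on f A} = falling_nat (card C) (card A)"
  using card_inj_on_subset_funcset[of A C A] by (simp add: falling_nat_def atLeast0LessThan)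

lemma avoiding_inj_empty: "avoiding_inj A C {} = {f \<in> A \<rightarrow>\<^sub>E C. inj_on f A}"
  unfolding avoiding_inj_def by auto

lemma avoiding_inj_strike:
  "avoiding_inj (A - {a}) (C - {c}) R = avoiding_inj (A - {a}) (C - {c}) (strike R a c)"
  unfolding avoiding_inj_def strike_def by (auto simp: PiE_def Pi_def)

lemma avoiding_inj_fix:
  assumes "a \<in> A" "c \<in> C" "(a, c) \<notin> R"
  shows "bij_betw (\<lambda>f. restrict f (A - {a}))
    {f \<in> avoiding_inj A C R. f a = c} (avoiding_inj (A - {a}) (C - {c}) R)"
proof (rule bij_betw_byWitness[where f'="\<lambda>g. g(a := c)"])
  show "\<forall>f\<in>{f \<in> avoiding_inj A C R. f a = c}. (restrict f (A - {a}))(a := c) = f"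
    by (auto simp: avoiding_inj_def restrict_def fun_eq_iff PiE_def extensional_def)
  show "\<forall>g\<in>avoiding_inj (A - {a}) (C - {c}) R. restrict (g(a := c)) (A - {a}) = g"
    by (auto simp: avoiding_inj_def restrict_def fun_eq_iff PiE_def extensional_def)
  show "(\<lambda>f. restrict f (A - {a})) ` {f \<in> avoiding_inj A C R. f a = c}
      \<subseteq> avoiding_inj (A - {a}) (C - {c}) R"
  proof
    fix g assume "g \<in> (\<lambda>f. restrict f (A - {a})) ` {f \<in> avoiding_inj A C R. f a = c}"
    then obtain f where f: "f \<in> avoiding_inj A C R" "f a = c" and g: "g = restrict f (A - {a})"
      by blast
    have "\<forall>x\<in>A - {a}. f x \<noteq> c" using f assms(1) unfolding avoiding_inj_def inj_on_def by force
    then show "g \<in> avoiding_inj (A - {a}) (C - {c}) R"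
      using f unfolding g avoiding_inj_def inj_on_def by auto
  qed
  show "(\<lambda>g. g(a := c)) ` avoiding_inj (A - {a}) (C - {c}) R \<subseteq> {f \<in> avoiding_inj A C R. f a = c}"
  proof
    fix f assume "f \<in> (\<lambda>g. g(a := c)) ` avoiding_inj (A - {a}) (C - {c}) R"
    then obtain g where g: "g \<in> avoiding_inj (A - {a}) (C - {c}) R" and f: "f = g(a := c)" by blast
    have "inj_on f A"
      using g assms unfolding f avoiding_inj_def inj_on_def by (auto simp: PiE_def Pi_def)
    then show "f \<in> {f \<in> avoiding_inj A C R. f a = c}"
      using g assms unfolding f avoiding_inj_def by (auto simp: PiE_def Pi_def extensional_def)
  qed
qed

(* Deletion-contraction for injections: either the cell (a,c) is avoided as well, or it is used. *)
lemma card_avoiding_inj_split: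
  assumes "finite A" "finite C" "a \<in> A" "c \<in> C" "(a, c) \<notin> R"
  shows "card (avoiding_inj A C R) =
    card (avoiding_inj A C (insert (a, c) R)) + card (avoiding_inj (A - {a}) (C - {c}) (strike R a c))"
proof -
  have fin: "finite (avoiding_inj A C R)" by (rule finite_avoiding_inj[OF assms(1,2)])
  have decomp: "avoiding_inj A C R = avoiding_inj A C (insert (a, c) R) \<union> {f \<in> avoiding_inj A C R. f a = c}"
    using assms(3) by (auto simp: avoiding_inj_def)
  have "card (avoiding_inj A C R) =
      card (avoiding_inj A C (insert (a, c) R)) + card {f \<in> avoiding_inj A C R. f a = c}"
    by (subst decomp, rule card_Un_disjoint)
       (use assms(3) fin in \<open>auto simp: avoiding_inj_def intro: finite_subset[OF _ fin]\<close>)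
  also have "card {f \<in> avoiding_inj A C R. f a = c} = card (avoiding_inj (A - {a}) (C - {c}) R)"
    by (rule bij_betw_same_card[OF avoiding_inj_fix[OF assms(3-5)]])
  finally show ?thesis by (simp only: avoiding_inj_strike[of A a C c R])
qed

lemma finite_matchings: "finite R \<Longrightarrow> finite (matchings R)"
  unfolding matchings_def by (rule finite_subset[of _ "Pow R"]) auto

lemma finite_matching: "finite R \<Longrightarrow> S \<in> matchings R \<Longrightarrow> finite S"
  unfolding matchings_def using finite_subset by blast

lemma matchings_empty: "matchings {} = {{}}"
  unfolding matchings_def by auto

(* A matching uses each row at most once, so it has at most as many cells as there are rows. *)
lemma matching_card_le:
  assumes "S \<in> matchings F" "F \<subseteq> A \<times> B" "finite A"
  shows "card S \<le> card A"
proof -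
  have "card S = card (fst ` S)" using assms(1) unfolding matchings_def by (simp add: card_image)
  also have "\<dots> \<le> card A" using assms by (intro card_mono) (auto simp: matchings_def)
  finally show ?thesis .
qed

lemma matchings_insert:
  assumes "(a, c) \<notin> R"
  shows "matchings (insert (a, c) R) = matchings R \<union> insert (a, c) ` matchings (strike R a c)"
proof (intro equalityI subsetI)
  fix S assume S: "S \<in> matchings (insert (a, c) R)"
  show "S \<in> matchings R \<union> insert (a, c) ` matchings (strike R a c)"
  proof (cases "(a, c) \<in> S")
    case False then show ?thesis using S by (auto simp: matchings_def)
  next
    case True
    have m: "S \<subseteq> insert (a, c) R" "inj_on fst S" "inj_on snd S" using S by (auto simp: matchings_def)
    have "S - {(a, c)} \<subseteq> strike R a c"
    proof
      fix p assume p: "p \<in> S - {(a, c)}"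
      have "fst p \<noteq> a" using p True m(2) unfolding inj_on_def by (metis DiffE fst_conv singletonI)
      moreover have "snd p \<noteq> c" using p True m(3) unfolding inj_on_def by (metis DiffE snd_conv singletonI)
      ultimately show "p \<in> strike R a c" using p m(1) by (auto simp: strike_def)
    qed
    then have "S - {(a, c)} \<in> matchings (strike R a c)"
      using m inj_on_subset[of fst S "S - {(a,c)}"] inj_on_subset[of snd S "S - {(a,c)}"]
      unfolding matchings_def by blast
    moreover have "S = insert (a, c) (S - {(a, c)})" using True by auto
    ultimately show ?thesis by blast
  qed
next
  fix S assume "S \<in> matchings R \<union> insert (a, c) ` matchings (strike R a c)"
  then show "S \<in> matchings (insert (a, c) R)"
  proof
    assume "S \<in> matchings R" then show ?thesis by (auto simp: matchings_def)
  next
    assume "S \<in> insert (a, c) ` matchings (strike R a c)"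
    then obtain T where T: "T \<in> matchings (strike R a c)" and S: "S = insert (a, c) T" by blast
    have "a \<notin> fst ` T" "c \<notin> snd ` T" using T by (auto simp: matchings_def strike_def)
    then show ?thesis using T unfolding S matchings_def strike_def by auto
  qed
qed

lemma sum_matchings_insert:
  fixes w :: "nat \<Rightarrow> real"
  assumes "finite R" "(a, c) \<notin> R"
  shows "(\<Sum>S\<in>matchings (insert (a, c) R). w (card S)) =
     (\<Sum>S\<in>matchings R. w (card S)) + (\<Sum>S\<in>matchings (strike R a c). w (card S + 1))"
proof -
  have fin: "finite (strike R a c)" using assms(1) by (simp add: strike_def)
  have notin: "(a, c) \<notin> S" if "S \<in> matchings (strike R a c)" for S
    using that by (auto simp: matchings_def strike_def)
  have inj: "inj_on (insert (a, c)) (matchings (strike R a c))"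
    by (rule inj_onI) (simp add: insert_ident notin)
  have "(\<Sum>S\<in>matchings (insert (a, c) R). w (card S)) =
     (\<Sum>S\<in>matchings R. w (card S)) + (\<Sum>S\<in>insert (a, c) ` matchings (strike R a c). w (card S))"
    unfolding matchings_insert[OF assms(2)]
    by (rule sum.union_disjoint)
       (use assms finite_matchings[OF fin] finite_matchings[OF assms(1)] in \<open>auto simp: matchings_def\<close>)
  also have "(\<Sum>S\<in>insert (a, c) ` matchings (strike R a c). w (card S)) =
      (\<Sum>S\<in>matchings (strike R a c). w (card S + 1))"
    using inj notin finite_matching[OF fin] by (simp add: sum.reindex)
  finally show ?thesis .
qed

lemma card_avoiding_inj_rook:
  assumes "finite A" "finite C" "R \<subseteq> A \<times> C"
  shows "real (card (avoiding_inj A C R)) =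
    (\<Sum>S\<in>matchings R. (-1) ^ card S * real (falling_nat (card C - card S) (card A - card S)))"
  using assms
proof (induction "card R" arbitrary: A C R rule: less_induct)
  case less
  show ?case
  proof (cases "R = {}")
    case True
    then show ?thesis using less.prems by (simp add: avoiding_inj_empty matchings_empty card_injections)
  next
    case False
    then obtain a c where "(a, c) \<in> R" by auto
    define R0 where "R0 = R - {(a, c)}"
    have R: "R = insert (a, c) R0" and cell: "(a, c) \<notin> R0"
      using \<open>(a, c) \<in> R\<close> unfolding R0_def by auto
    have fin: "finite R0" and ac: "a \<in> A" "c \<in> C" and sub: "R0 \<subseteq> A \<times> C"
      using less.prems finite_subset unfolding R by auto
    have smaller: "card R0 < card R" "card (strike R0 a c) < card R"
      using fin cell card_mono[OF fin, of "strike R0 a c"] unfolding R strike_def by auto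
    define w where "w s = (-1) ^ s * real (falling_nat (card C - s) (card A - s))" for s
    have IH_delete: "real (card (avoiding_inj A C R0)) = (\<Sum>S\<in>matchings R0. w (card S))"
      unfolding w_def by (rule less.hyps[OF smaller(1) less.prems(1,2) sub])
    have "real (card (avoiding_inj (A - {a}) (C - {c}) (strike R0 a c))) =
        (\<Sum>S\<in>matchings (strike R0 a c).
          (-1) ^ card S * real (falling_nat (card (C - {c}) - card S) (card (A - {a}) - card S)))"
      by (rule less.hyps[OF smaller(2)]) (use less.prems sub in \<open>auto simp: strike_def\<close>)
    also have "\<dots> = - (\<Sum>S\<in>matchings (strike R0 a c). w (card S + 1))"
      unfolding w_def sum_negf[symmetric] using ac less.prems
      by (intro sum.cong refl) (simp add: card_Diff_singleton)
    finally have IH_contract: "real (card (avoiding_inj (A - {a}) (C - {c}) (strike R0 a c))) =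
        - (\<Sum>S\<in>matchings (strike R0 a c). w (card S + 1))" .
    have "real (card (avoiding_inj A C R)) = real (card (avoiding_inj A C R0))
        - real (card (avoiding_inj (A - {a}) (C - {c}) (strike R0 a c)))"
      using card_avoiding_inj_split[OF less.prems(1,2) ac cell] unfolding R by simp
    also have "\<dots> = (\<Sum>S\<in>matchings R. w (card S))"
      unfolding IH_delete IH_contract R sum_matchings_insert[OF fin cell] by simp
    finally show ?thesis unfolding w_def .
  qed
qed

lemma avoiding_inj_full_board:
  "T \<inter> U = {} \<Longrightarrow> avoiding_inj A (T \<union> U) (A \<times> T) = {f \<in> A \<rightarrow>\<^sub>E U. inj_on f A}"
  unfolding avoiding_inj_def by (auto simp: PiE_def Pi_def)

(* The complementary count: if R \<subseteq> A \<times> T and the colours are T plus a disjoint set U, an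
   injection avoiding R is a matching S of A \<times> T - R (the cells it uses inside T) together
   with an injection of the remaining rows into U. *)
lemma card_avoiding_inj_compl_board:
  assumes "finite A" "finite T" "finite U" "T \<inter> U = {}" "R \<subseteq> A \<times> T"
  shows "real (card (avoiding_inj A (T \<union> U) R)) =
    (\<Sum>S\<in>matchings (A \<times> T - R). real (falling_nat (card U) (card A - card S)))"
  using assms
proof (induction "card (A \<times> T - R)" arbitrary: A T R rule: less_induct)
  case less
  show ?case
  proof (cases "A \<times> T - R = {}")
    case True
    then have "R = A \<times> T" using less.prems(5) by auto
    then show ?thesis using less.prems True by (simp add: avoiding_inj_full_board matchings_empty card_injections)
  next
    case False
    then obtain a t where cell: "(a, t) \<in> A \<times> T - R" by auto
    define P where "P = A \<times> T - insert (a, t) R"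
    have at: "a \<in> A" "t \<in> T" "(a, t) \<notin> R" "t \<notin> U" using cell less.prems by auto
    have P: "A \<times> T - R = insert (a, t) P" "(a, t) \<notin> P" "finite P"
      using cell less.prems unfolding P_def by auto
    have P': "(A - {a}) \<times> (T - {t}) - strike R a t = strike P a t" unfolding P_def strike_def by auto
    have smaller: "card P < card (A \<times> T - R)" "card (strike P a t) < card (A \<times> T - R)"
      unfolding P using card_mono[OF P(3), of "strike P a t"] P(2,3) by (auto simp: strike_def)
    have sub: "insert (a, t) R \<subseteq> A \<times> T" "strike R a t \<subseteq> (A - {a}) \<times> (T - {t})"
      and TU: "T \<union> U - {t} = (T - {t}) \<union> U" and dj: "(T - {t}) \<inter> U = {}"
      using less.prems at by (auto simp: strike_def)
    define w where "w s = real (falling_nat (card U) (card A - s))" for s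
    have IH_delete: "real (card (avoiding_inj A (T \<union> U) (insert (a, t) R))) = (\<Sum>S\<in>matchings P. w (card S))"
      unfolding w_def P_def by (rule less.hyps[OF smaller(1)[unfolded P_def] less.prems(1-4) sub(1)])
    have "real (card (avoiding_inj (A - {a}) ((T - {t}) \<union> U) (strike R a t))) =
        (\<Sum>S\<in>matchings (strike P a t). real (falling_nat (card U) (card (A - {a}) - card S)))"
      unfolding P'[symmetric]
      by (rule less.hyps[OF smaller(2)[folded P'] _ _ less.prems(3) dj sub(2)]) (use less.prems in auto)
    also have "\<dots> = (\<Sum>S\<in>matchings (strike P a t). w (card S + 1))"
      unfolding w_def using at less.prems by (intro sum.cong refl) (simp add: card_Diff_singleton)
    finally have IH_contract: "real (card (avoiding_inj (A - {a}) ((T - {t}) \<union> U) (strike R a t))) =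
        (\<Sum>S\<in>matchings (strike P a t). w (card S + 1))" .
    have "real (card (avoiding_inj A (T \<union> U) R)) = real (card (avoiding_inj A (T \<union> U) (insert (a, t) R)))
        + real (card (avoiding_inj (A - {a}) ((T - {t}) \<union> U) (strike R a t)))"
      using card_avoiding_inj_split[of A "T \<union> U" a t R] less.prems at unfolding TU by simp
    also have "\<dots> = (\<Sum>S\<in>matchings (A \<times> T - R). w (card S))"
      unfolding IH_delete IH_contract P(1) sum_matchings_insert[OF P(3,2)] ..
    finally show ?thesis unfolding w_def .
  qed
qed

lemma inj_on_image_coord:
  assumes "inj_on h Q" "S \<subseteq> Q" "\<And>x y. x \<in> Q \<Longrightarrow> y \<in> Q \<Longrightarrow> g (h x) = g (h y) \<longleftrightarrow> g' x = g' y"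
  shows "inj_on g (h ` S) \<longleftrightarrow> inj_on g' S"
  using assms unfolding inj_on_def by (smt (verit, best) image_iff subsetD)

lemma matchings_image:
  assumes h: "inj_on h Q"
    and f: "\<And>x y. x \<in> Q \<Longrightarrow> y \<in> Q \<Longrightarrow> fst (h x) = fst (h y) \<longleftrightarrow> fst x = fst y"
    and s: "\<And>x y. x \<in> Q \<Longrightarrow> y \<in> Q \<Longrightarrow> snd (h x) = snd (h y) \<longleftrightarrow> snd x = snd y"
  shows "matchings (h ` Q) = image h ` matchings Q"
proof (intro equalityI subsetI)
  fix T assume T: "T \<in> matchings (h ` Q)"
  define S where "S = {x \<in> Q. h x \<in> T}"
  have S: "S \<subseteq> Q" "T = h ` S" using T unfolding S_def matchings_def by auto
  have "inj_on fst S" "inj_on snd S"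
    using T inj_on_image_coord[OF h S(1), of fst fst] inj_on_image_coord[OF h S(1), of snd snd] f s
    unfolding S(2) matchings_def by auto
  then show "T \<in> image h ` matchings Q" using S unfolding matchings_def by blast
next
  fix T assume "T \<in> image h ` matchings Q"
  then obtain S where S: "S \<in> matchings Q" "T = h ` S" by blast
  then have SQ: "S \<subseteq> Q" unfolding matchings_def by auto
  have "inj_on fst T" "inj_on snd T"
    using S inj_on_image_coord[OF h SQ, of fst fst] inj_on_image_coord[OF h SQ, of snd snd] f s
    unfolding matchings_def by auto
  then show "T \<in> matchings (h ` Q)" using SQ unfolding S(2) matchings_def by blast
qed

definition relabel_board :: "('a \<times> 'b) set \<Rightarrow> ('b \<Rightarrow> 'c) \<Rightarrow> ('a \<times> 'c) set" where
  "relabel_board F \<sigma> = map_prod id \<sigma> ` F"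

lemma sum_matchings_relabel:
  fixes w :: "nat \<Rightarrow> real"
  assumes \<sigma>: "inj_on \<sigma> B" and Q: "Q \<subseteq> A \<times> B"
  shows "(\<Sum>S\<in>matchings (relabel_board Q \<sigma>). w (card S)) = (\<Sum>S\<in>matchings Q. w (card S))"
proof -
  let ?h = "map_prod id \<sigma>"
  have h: "inj_on ?h Q" by (rule inj_on_subset[OF map_prod_inj_on[OF inj_on_id \<sigma>] Q])
  have "snd (?h x) = snd (?h y) \<longleftrightarrow> snd x = snd y" if "x \<in> Q" "y \<in> Q" for x y
  proof -
    have "snd x \<in> B" "snd y \<in> B" using that Q by auto
    then show ?thesis using inj_on_eq_iff[OF \<sigma>] by simp
  qed
  then have "matchings (relabel_board Q \<sigma>) = image ?h ` matchings Q"
    unfolding relabel_board_def by (intro matchings_image[OF h]) auto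
  moreover have "inj_on (image ?h) (matchings Q)"
    by (rule inj_on_image, rule inj_on_subset[OF h]) (auto simp: matchings_def)
  moreover have "card (?h ` S) = card S" if "S \<in> matchings Q" for S
    using that card_image[OF inj_on_subset[OF h]] by (auto simp: matchings_def)
  ultimately show ?thesis by (simp add: sum.reindex)
qed

section \<open>Proper colourings of a biclique\<close>

lemma proper_coloring_biclique_iff:
  assumes "A \<inter> B = {}" "F \<subseteq> A \<times> B"
  shows "c \<in> proper_colorings (A \<union> B) (biclique_adj A B F) n \<longleftrightarrow>
    c \<in> (A \<union> B) \<rightarrow>\<^sub>E {..<n} \<and> inj_on c A \<and> inj_on c B \<and> (\<forall>(a, b)\<in>F. c a \<noteq> c b)"
proof -
  have "(\<forall>u\<in>A \<union> B. \<forall>v\<in>A \<union> B. biclique_adj A B F u v \<longrightarrow> c u \<noteq> c v) \<longleftrightarrow>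
      inj_on c A \<and> inj_on c B \<and> (\<forall>(a, b)\<in>F. c a \<noteq> c b)"
    (is "?proper \<longleftrightarrow> ?split")
  proof
    assume proper: ?proper
    have "inj_on c A" "inj_on c B"
      using proper unfolding inj_on_def biclique_adj_def by blast+
    moreover have "c a \<noteq> c b" if "(a, b) \<in> F" for a b
    proof -
      have "a \<in> A" "b \<in> B" "a \<noteq> b" using that assms by auto
      then show ?thesis using proper that unfolding biclique_adj_def by blast
    qed
    ultimately show ?split by blast
  next
    assume split: ?split
    show ?proper
    proof (intro ballI impI)
      fix u v assume "biclique_adj A B F u v"
      then show "c u \<noteq> c v"
        using split unfolding biclique_adj_def inj_on_def by (elim conjE disjE) fastforce+
    qed
  qed
  then show ?thesis unfolding proper_colorings_def by simp
qed

lemma restrict_proper_coloring: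
  assumes dj: "A \<inter> B = {}" and FAB: "F \<subseteq> A \<times> B"
    and c: "c \<in> proper_colorings (A \<union> B) (biclique_adj A B F) n"
  shows "restrict c B \<in> {\<sigma> \<in> B \<rightarrow>\<^sub>E {..<n}. inj_on \<sigma> B}"
    and "restrict c A \<in> avoiding_inj A {..<n} (relabel_board F (restrict c B))"
proof -
  note c' = c[unfolded proper_coloring_biclique_iff[OF dj FAB]]
  show "restrict c B \<in> {\<sigma> \<in> B \<rightarrow>\<^sub>E {..<n}. inj_on \<sigma> B}"
    using c' by (auto simp: inj_on_def)
  have "(a, c a) \<notin> relabel_board F (restrict c B)" for a
    using c' FAB by (fastforce simp: relabel_board_def)
  then show "restrict c A \<in> avoiding_inj A {..<n} (relabel_board F (restrict c B))"
    using c' by (auto simp: avoiding_inj_def inj_on_def)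
qed

lemma merge_proper_coloring:
  assumes dj: "A \<inter> B = {}" and FAB: "F \<subseteq> A \<times> B"
    and \<sigma>: "\<sigma> \<in> B \<rightarrow>\<^sub>E {..<n}" "inj_on \<sigma> B"
    and f: "f \<in> avoiding_inj A {..<n} (relabel_board F \<sigma>)"
  shows "(\<lambda>x. if x \<in> B then \<sigma> x else f x) \<in> proper_colorings (A \<union> B) (biclique_adj A B F) n"
  unfolding proper_coloring_biclique_iff[OF dj FAB]
proof (intro conjI)
  show "(\<lambda>x. if x \<in> B then \<sigma> x else f x) \<in> (A \<union> B) \<rightarrow>\<^sub>E {..<n}"
    using \<sigma> f by (auto simp: avoiding_inj_def PiE_def Pi_def extensional_def)
  show "inj_on (\<lambda>x. if x \<in> B then \<sigma> x else f x) A"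
    using f dj by (auto simp: avoiding_inj_def inj_on_def)
  show "inj_on (\<lambda>x. if x \<in> B then \<sigma> x else f x) B"
    using \<sigma> by (auto simp: inj_on_def)
  have "(if a \<in> B then \<sigma> a else f a) \<noteq> (if b \<in> B then \<sigma> b else f b)" if ab: "(a, b) \<in> F" for a b
  proof -
    have "a \<in> A" "a \<notin> B" "b \<in> B" using ab FAB dj by auto
    moreover have "(a, \<sigma> b) \<in> relabel_board F \<sigma>" using ab by (force simp: relabel_board_def)
    ultimately show ?thesis using f unfolding avoiding_inj_def by force
  qed
  then show "\<forall>(a, b)\<in>F. (if a \<in> B then \<sigma> a else f a) \<noteq> (if b \<in> B then \<sigma> b else f b)"
    by blast
qed

lemma card_proper_colorings_biclique:
  assumes fA: "finite A" and fB: "finite B" and dj: "A \<inter> B = {}" and FAB: "F \<subseteq> A \<times> B"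
  shows "card (proper_colorings (A \<union> B) (biclique_adj A B F) n) =
    (\<Sum>\<sigma>\<in>{\<sigma> \<in> B \<rightarrow>\<^sub>E {..<n}. inj_on \<sigma> B}. card (avoiding_inj A {..<n} (relabel_board F \<sigma>)))"
proof -
  let ?P = "proper_colorings (A \<union> B) (biclique_adj A B F) n"
  let ?IB = "{\<sigma> \<in> B \<rightarrow>\<^sub>E {..<n}. inj_on \<sigma> B}"
  let ?S = "SIGMA \<sigma>:?IB. avoiding_inj A {..<n} (relabel_board F \<sigma>)"
  have "bij_betw (\<lambda>c. (restrict c B, restrict c A)) ?P ?S"
  proof (rule bij_betw_byWitness[where f'="\<lambda>(\<sigma>, f) x. if x \<in> B then \<sigma> x else f x"])
    show "\<forall>c\<in>?P. (\<lambda>(\<sigma>, f) x. if x \<in> B then \<sigma> x else f x) (restrict c B, restrict c A) = c"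
      by (auto simp: proper_coloring_biclique_iff[OF dj FAB] fun_eq_iff PiE_def extensional_def)
    show "\<forall>y\<in>?S. (\<lambda>c. (restrict c B, restrict c A)) ((\<lambda>(\<sigma>, f) x. if x \<in> B then \<sigma> x else f x) y) = y"
      using dj by (auto simp: avoiding_inj_def fun_eq_iff PiE_def extensional_def)
    show "(\<lambda>c. (restrict c B, restrict c A)) ` ?P \<subseteq> ?S"
      using restrict_proper_coloring[OF dj FAB] by blast
    show "(\<lambda>(\<sigma>, f) x. if x \<in> B then \<sigma> x else f x) ` ?S \<subseteq> ?P"
      by (auto intro!: merge_proper_coloring[OF dj FAB])
  qed
  then have "card ?P = card ?S" by (rule bij_betw_same_card)
  also have "\<dots> = (\<Sum>\<sigma>\<in>?IB. card (avoiding_inj A {..<n} (relabel_board F \<sigma>)))"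
    by (rule card_SigmaI)
       (use finite_subset[OF _ finite_PiE[OF fB, of "\<lambda>_. {..<n}"]] finite_avoiding_inj[OF fA] in auto)
  finally show ?thesis .
qed

lemma card_relabelled_rook:
  assumes "finite A" "F \<subseteq> A \<times> B" "\<sigma> \<in> B \<rightarrow>\<^sub>E {..<n}" "inj_on \<sigma> B"
  shows "real (card (avoiding_inj A {..<n} (relabel_board F \<sigma>))) =
      (\<Sum>S\<in>matchings F. (-1) ^ card S * real (falling_nat (n - card S) (card A - card S)))"
proof -
  have "relabel_board F \<sigma> \<subseteq> A \<times> {..<n}" using assms(2,3) unfolding relabel_board_def by auto
  then show ?thesis
    using card_avoiding_inj_rook[OF assms(1) finite_lessThan] sum_matchings_relabel[OF assms(4,2)]
    by simp
qed

lemma card_relabelled_compl: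
  assumes "finite A" "finite B" "F \<subseteq> A \<times> B" "\<sigma> \<in> B \<rightarrow>\<^sub>E {..<n}" "inj_on \<sigma> B"
  shows "real (card (avoiding_inj A {..<n} (relabel_board F \<sigma>))) =
      (\<Sum>S\<in>matchings (A \<times> B - F). real (falling_nat (n - card B) (card A - card S)))"
proof -
  have sB: "\<sigma> ` B \<subseteq> {..<n}" using assms(4) by auto
  have colours: "{..<n} = \<sigma> ` B \<union> ({..<n} - \<sigma> ` B)" using sB by auto
  have card_rest: "card ({..<n} - \<sigma> ` B) = n - card B"
    using sB card_image[OF assms(5)] by (simp add: card_Diff_subset assms(2))
  have sub: "relabel_board F \<sigma> \<subseteq> A \<times> \<sigma> ` B" using assms(3) unfolding relabel_board_def by auto
  have h: "inj_on (map_prod id \<sigma>) (A \<times> B)" by (rule map_prod_inj_on[OF inj_on_id assms(5)])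
  have "A \<times> \<sigma> ` B = map_prod id \<sigma> ` (A \<times> B)" by (auto simp: image_iff)
  then have compl: "A \<times> \<sigma> ` B - relabel_board F \<sigma> = relabel_board (A \<times> B - F) \<sigma>"
    unfolding relabel_board_def using inj_on_image_set_diff[OF h _ assms(3)] by auto
  have "real (card (avoiding_inj A {..<n} (relabel_board F \<sigma>))) =
      (\<Sum>S\<in>matchings (relabel_board (A \<times> B - F) \<sigma>). real (falling_nat (n - card B) (card A - card S)))"
    by (subst colours, subst card_avoiding_inj_compl_board) (use assms(1,2) sub compl card_rest in auto)
  also have "\<dots> = (\<Sum>S\<in>matchings (A \<times> B - F). real (falling_nat (n - card B) (card A - card S)))"
    by (rule sum_matchings_relabel[OF assms(5)]) auto
  finally show ?thesis .
qed

section \<open>Polynomials\<close>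

definition fpoly :: "nat \<Rightarrow> nat \<Rightarrow> real poly" where
  "fpoly s m = (\<Prod>i<m. [:- (real s + real i), 1:])"

lemma poly_fpoly: "poly (fpoly s m) x = (\<Prod>i<m. x - real s - real i)"
  unfolding fpoly_def by (simp add: poly_prod algebra_simps)

lemma falling_fpoly: "falling_poly k = fpoly 0 k"
  unfolding falling_poly_def fpoly_def by simp

lemma fpoly_nonzero: "fpoly s m \<noteq> 0"
  unfolding fpoly_def by simp

lemma real_falling_nat: "real (falling_nat c m) = (\<Prod>i<m. real c - real i)"
proof (cases "c < m")
  case True
  then have "falling_nat c m = 0" unfolding falling_nat_def by (intro prod_zero) auto
  moreover have "(\<Prod>i<m. real c - real i) = 0" using True by (intro prod_zero) auto
  ultimately show ?thesis by simp
next
  case False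
  then show ?thesis unfolding falling_nat_def by (simp add: of_nat_prod of_nat_diff)
qed

lemma falling_nat_fpoly: "s \<le> n \<Longrightarrow> real (falling_nat (n - s) m) = poly (fpoly s m) (real n)"
  unfolding real_falling_nat poly_fpoly by (simp add: of_nat_diff algebra_simps)

lemma poly_eq_from_nat:
  fixes p q :: "real poly"
  assumes "\<And>n. n \<ge> k \<Longrightarrow> poly p (real n) = poly q (real n)"
  shows "p = q"
proof (rule ccontr)
  assume "p \<noteq> q"
  then have "finite {x. poly (p - q) x = 0}" by (intro poly_roots_finite) simp
  moreover have "real ` {k..} \<subseteq> {x. poly (p - q) x = 0}" using assms by auto
  ultimately have "finite (real ` {k..})" using finite_subset by blast
  then show False using infinite_Ici finite_imageD inj_on_subset[OF inj_of_nat] by blast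
qed

lemma chromatic_poly_eqI:
  assumes "\<And>n. poly p (real n) = real (card (proper_colorings V adj n))"
  shows "chromatic_poly V adj = p"
  unfolding chromatic_poly_def
proof (rule the_equality)
  show "\<forall>n. poly p (real n) = real (card (proper_colorings V adj n))" using assms by simp
  fix q assume "\<forall>n. poly q (real n) = real (card (proper_colorings V adj n))"
  then show "q = p" using assms by (intro poly_eq_from_nat[where k=0]) simp
qed

lemma fpoly_reflect:
  assumes "s \<le> j"
  shows "smult ((-1) ^ s) (fpoly s (j - s)) =
    smult ((-1) ^ j) (pcompose (fpoly k (j - s)) [:of_nat (j + k - 1), -1:])"
proof -
  define m where "m = j - s"
  have jm: "j = s + m" using assms unfolding m_def by simp
  have "poly (fpoly s m) x = (-1) ^ m * poly (fpoly k m) (real (j + k - 1) - x)" for x :: real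
  proof -
    have "poly (fpoly s m) x = (\<Prod>i<m. x - real s - real (m - Suc i))"
      unfolding poly_fpoly by (rule prod.nat_diff_reindex[symmetric])
    also have "\<dots> = (\<Prod>i<m. (-1) * (real (j + k - 1) - x - real k - real i))"
      by (rule prod.cong[OF refl]) (auto simp: jm of_nat_diff algebra_simps)
    also have "\<dots> = (-1) ^ m * poly (fpoly k m) (real (j + k - 1) - x)"
      unfolding prod.distrib poly_fpoly by simp
    finally show ?thesis .
  qed
  then show ?thesis
    unfolding poly_eq_poly_eq_iff[symmetric] m_def[symmetric]
    by (auto simp: poly_pcompose jm power_add fun_eq_iff)
qed

section \<open>The interesting factor\<close>

lemma chromatic_poly_biclique:
  assumes fA: "finite A" and fB: "finite B" and dj: "A \<inter> B = {}" and FAB: "F \<subseteq> A \<times> B"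
    and count: "\<And>n \<sigma>. card B \<le> n \<Longrightarrow> \<sigma> \<in> B \<rightarrow>\<^sub>E {..<n} \<Longrightarrow> inj_on \<sigma> B \<Longrightarrow>
        real (card (avoiding_inj A {..<n} (relabel_board F \<sigma>))) = poly Q (real n)"
  shows "chromatic_poly (A \<union> B) (biclique_adj A B F) = falling_poly (card B) * Q"
proof (rule chromatic_poly_eqI)
  fix n :: nat
  define IB where "IB = {\<sigma> \<in> B \<rightarrow>\<^sub>E {..<n}. inj_on \<sigma> B}"
  have card_IB: "card IB = falling_nat n (card B)"
    unfolding IB_def using card_injections[OF fB, of "{..<n}"] by simp
  have "(\<Sum>\<sigma>\<in>IB. real (card (avoiding_inj A {..<n} (relabel_board F \<sigma>)))) = (\<Sum>\<sigma>\<in>IB. poly Q (real n))"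
  proof (cases "card B \<le> n")
    case True
    then show ?thesis using count unfolding IB_def by (intro sum.cong) auto
  next
    case False
    then have "falling_nat n (card B) = 0" unfolding falling_nat_def by (intro prod_zero) auto
    moreover have "finite IB"
      unfolding IB_def by (rule finite_subset[OF _ finite_PiE[OF fB, of "\<lambda>_. {..<n}"]]) auto
    ultimately have "IB = {}" using card_IB by simp
    then show ?thesis by simp
  qed
  also have "\<dots> = poly (falling_poly (card B) * Q) (real n)"
    using card_IB falling_nat_fpoly[of 0 n "card B"] by (simp add: falling_fpoly)
  finally show "poly (falling_poly (card B) * Q) (real n) =
      real (card (proper_colorings (A \<union> B) (biclique_adj A B F) n))"
    unfolding card_proper_colorings_biclique[OF fA fB dj FAB] IB_def by simp
qed

lemma interesting_factor_eqI:
  assumes "finite A" "finite B" "A \<inter> B = {}" "F \<subseteq> A \<times> B"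
    and "\<And>n \<sigma>. card B \<le> n \<Longrightarrow> \<sigma> \<in> B \<rightarrow>\<^sub>E {..<n} \<Longrightarrow> inj_on \<sigma> B \<Longrightarrow>
        real (card (avoiding_inj A {..<n} (relabel_board F \<sigma>))) = poly Q (real n)"
  shows "interesting_factor A B F = Q"
proof -
  have "chromatic_poly (A \<union> B) (biclique_adj A B F) = falling_poly (card B) * Q"
    by (rule chromatic_poly_biclique[OF assms])
  then show ?thesis
    unfolding interesting_factor_def using fpoly_nonzero[of 0 "card B"] by (simp add: falling_fpoly)
qed

(* Rook expansion over the bridging edges (needs j \<le> k so every matching fits in the colours). *)
lemma interesting_factor_rook:
  assumes fA: "finite A" and fB: "finite B" and dj: "A \<inter> B = {}" and FAB: "F \<subseteq> A \<times> B"
    and AB: "card A \<le> card B"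
  shows "interesting_factor A B F =
    (\<Sum>S\<in>matchings F. smult ((-1) ^ card S) (fpoly (card S) (card A - card S)))"
proof (rule interesting_factor_eqI[OF fA fB dj FAB])
  fix n \<sigma> assume n: "card B \<le> n" and \<sigma>: "\<sigma> \<in> B \<rightarrow>\<^sub>E {..<n}" "inj_on \<sigma> B"
  have "card S \<le> n" if "S \<in> matchings F" for S
    using matching_card_le[OF that FAB fA] AB n by linarith
  then show "real (card (avoiding_inj A {..<n} (relabel_board F \<sigma>))) =
      poly (\<Sum>S\<in>matchings F. smult ((-1) ^ card S) (fpoly (card S) (card A - card S))) (real n)"
    unfolding card_relabelled_rook[OF fA FAB \<sigma>] poly_sum by (simp add: falling_nat_fpoly)
qed

lemma interesting_factor_compl_rook:
  assumes fA: "finite A" and fB: "finite B" and dj: "A \<inter> B = {}" and FAB: "F \<subseteq> A \<times> B"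
  shows "interesting_factor A B F = (\<Sum>S\<in>matchings (A \<times> B - F). fpoly (card B) (card A - card S))"
proof (rule interesting_factor_eqI[OF fA fB dj FAB])
  fix n \<sigma> assume n: "card B \<le> n" and \<sigma>: "\<sigma> \<in> B \<rightarrow>\<^sub>E {..<n}" "inj_on \<sigma> B"
  show "real (card (avoiding_inj A {..<n} (relabel_board F \<sigma>))) =
      poly (\<Sum>S\<in>matchings (A \<times> B - F). fpoly (card B) (card A - card S)) (real n)"
    unfolding card_relabelled_compl[OF fA fB FAB \<sigma>] poly_sum using n by (simp add: falling_nat_fpoly)
qed

theorem mainTheorem5:
  fixes A B :: "'a set" and F :: "('a \<times> 'a) set" and j k :: nat
  assumes "finite A" "finite B" "A \<inter> B = {}"
    and "card A = j" "card B = k" "1 \<le> j" "j \<le> k"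
    and "F \<subseteq> A \<times> B"
  shows "interesting_factor A B F =
           smult ((-1) ^ j)
             (pcompose (interesting_factor A B (compl_bridges A B F))
                       [:of_nat (j + k - 1), -1:])"
proof -
  let ?reflect = "[:of_nat (j + k - 1), -1:] :: real poly"
  have compl_sub: "compl_bridges A B F \<subseteq> A \<times> B" and compl_compl: "A \<times> B - compl_bridges A B F = F"
    using assms(8) unfolding compl_bridges_def by auto
  have "interesting_factor A B F = (\<Sum>S\<in>matchings F. smult ((-1) ^ card S) (fpoly (card S) (j - card S)))"
    using interesting_factor_rook[OF assms(1-3,8)] assms(4,5,7) by simp
  also have "\<dots> = (\<Sum>S\<in>matchings F. smult ((-1) ^ j) (pcompose (fpoly k (j - card S)) ?reflect))"
    using matching_card_le[OF _ assms(8,1)] assms(4) by (intro sum.cong refl fpoly_reflect) auto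
  also have "\<dots> = smult ((-1) ^ j) (pcompose (\<Sum>S\<in>matchings F. fpoly k (j - card S)) ?reflect)"
    by (simp add: pcompose_sum poly_sum sum_distrib_left fun_eq_iff flip: poly_eq_poly_eq_iff)
  also have "(\<Sum>S\<in>matchings F. fpoly k (j - card S)) = interesting_factor A B (compl_bridges A B F)"
    using interesting_factor_compl_rook[OF assms(1-3) compl_sub] assms(4,5) unfolding compl_compl by simp
  finally show ?thesis .
qed

end
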